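(* Let $n>3$ and let $L$ and ${}^*L=e^{\sigma(x)}L+\beta$ be as in the context. Define $\zeta_{hijk}=\frac1L\Big[S_{hijk}-\frac{S}{(n-1)(n-2)}(h_{ik}h_{jh}-h_{ij}h_{hk})\Big]$ and ${}^*\zeta_{hijk}$ by the same formula built from ${}^*L$. Then ${}^*\zeta_{hijk}=e^{\sigma(x)}\zeta_{hijk}$ holds identically if and only if $H_{ij}=\frac{1}{n-1}A_\beta\,h_{ij}$ holds identically.
   Context: $M$ is a smooth manifold of dimension $n$ with local coordinates $(x^i)$ and induced fiber coordinates $(y^i)$ on $TM$. $L(x,y)$ is a Finsler metric: positive and smooth for $y\neq0$, positively homogeneous of degree 1 in $y$, with positive definite fundamental tensor $g_{ij}=\frac12\frac{\partial^2L^2}{\partial y^i\partial y^j}$ and inverse $g^{ij}$. $\sigma(x)$ is a smooth function on $M$ and $\beta(x,y)=b_i(x)y^i$ is a 1-form; the conformal $\beta$-change is ${}^*L=e^{\sigma(x)}L+\beta$, assumed to be again a Finsler metric. Notation: $l_i=\partial L/\partial y^i$, $l^i=g^{ij}l_j$, $h_{ij}=g_{ij}-l_il_j$, $c_{ijk}=\frac12\partial g_{ij}/\partial y^k$, $c_i{}^r{}_j=g^{rk}c_{ijk}$, $c_i=g^{jk}c_{ijk}$, $b^i=g^{ij}b_j$, $m_i=b_i-\frac{\beta}{L}l_i$, $m^i=g^{ij}m_j$, $m^2=m_im^i$, $c_\beta=c_ib^i$, $A_\beta=c_\beta+\frac{n+1}{4\,{}^*L}m^2$, $H_{ij}=c_i{}^r{}_jm_r+\frac{1}{2\,{}^*L}m_im_j+\frac{1}{4\,{}^*L}h_{ij}m^2$.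 $S_{hijk}=c_{ijr}c_h{}^r{}_k-c_{ikr}c_h{}^r{}_j$, $S_{ik}=g^{hj}S_{hijk}$, $S=g^{ik}S_{ik}$. Quantities built from ${}^*L$ by the same formulas (using ${}^*g_{ij}$ and its inverse ${}^*g^{ij}$) are denoted with a left asterisk. *)

theory Defs
  imports "HOL-Analysis.Analysis"
begin

fun Ck_on :: "nat \<Rightarrow> 'a::euclidean_space set \<Rightarrow> ('a \<Rightarrow> real) \<Rightarrow> bool" where
  "Ck_on 0 S f = continuous_on S f"
| "Ck_on (Suc k) S f =
     (f differentiable_on S \<and> (\<forall>v. Ck_on k S (\<lambda>x. frechet_derivative f (at x) v)))"

definition smooth_on :: "'a::euclidean_space set \<Rightarrow> ('a \<Rightarrow> real) \<Rightarrow> bool" where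
  "smooth_on S f = (\<forall>k. Ck_on k S f)"

definition dy :: "(real^'n \<Rightarrow> real) \<Rightarrow> 'n \<Rightarrow> real^'n \<Rightarrow> real" where
  "dy F i y = deriv (\<lambda>t. F (y + t *\<^sub>R axis i 1)) 0"

definition lcov :: "(real^'n \<Rightarrow> real) \<Rightarrow> 'n \<Rightarrow> real^'n \<Rightarrow> real" where
  "lcov F i y = dy F i y"

definition gf :: "(real^'n \<Rightarrow> real) \<Rightarrow> 'n \<Rightarrow> 'n \<Rightarrow> real^'n \<Rightarrow> real" where
  "gf F i j y = (1/2) * dy (\<lambda>z. dy (\<lambda>w. (F w)\<^sup>2) j z) i y"

definition gmat :: "(real^'n \<Rightarrow> real) \<Rightarrow> real^'n \<Rightarrow> real^'n^'n" where
  "gmat F y = (\<chi> i j. gf F i j y)"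

definition ginv :: "(real^'n \<Rightarrow> real) \<Rightarrow> 'n \<Rightarrow> 'n \<Rightarrow> real^'n \<Rightarrow> real" where
  "ginv F i j y = matrix_inv (gmat F y) $ i $ j"

definition hf :: "(real^'n \<Rightarrow> real) \<Rightarrow> 'n \<Rightarrow> 'n \<Rightarrow> real^'n \<Rightarrow> real" where
  "hf F i j y = gf F i j y - lcov F i y * lcov F j y"

definition cf :: "(real^'n \<Rightarrow> real) \<Rightarrow> 'n \<Rightarrow> 'n \<Rightarrow> 'n \<Rightarrow> real^'n \<Rightarrow> real" where
  "cf F i j k y = (1/2) * dy (\<lambda>z. gf F i j z) k y"

definition cmix :: "(real^'n \<Rightarrow> real) \<Rightarrow> 'n \<Rightarrow> 'n \<Rightarrow> 'n \<Rightarrow> real^'n \<Rightarrow> real" where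
  "cmix F i r j y = (\<Sum>k\<in>UNIV. ginv F r k y * cf F i j k y)"

definition cvec :: "(real^'n \<Rightarrow> real) \<Rightarrow> 'n \<Rightarrow> real^'n \<Rightarrow> real" where
  "cvec F i y = (\<Sum>j\<in>UNIV. \<Sum>k\<in>UNIV. ginv F j k y * cf F i j k y)"

definition Sf :: "(real^'n \<Rightarrow> real) \<Rightarrow> 'n \<Rightarrow> 'n \<Rightarrow> 'n \<Rightarrow> 'n \<Rightarrow> real^'n \<Rightarrow> real" where
  "Sf F h i j k y = (\<Sum>r\<in>UNIV. cf F i j r y * cmix F h r k y - cf F i k r y * cmix F h r j y)"

definition Sric :: "(real^'n \<Rightarrow> real) \<Rightarrow> 'n \<Rightarrow> 'n \<Rightarrow> real^'n \<Rightarrow> real" where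
  "Sric F i k y = (\<Sum>h\<in>UNIV. \<Sum>j\<in>UNIV. ginv F h j y * Sf F h i j k y)"

definition Sscal :: "(real^'n \<Rightarrow> real) \<Rightarrow> real^'n \<Rightarrow> real" where
  "Sscal F y = (\<Sum>i\<in>UNIV. \<Sum>k\<in>UNIV. ginv F i k y * Sric F i k y)"

definition zeta :: "(real^'n \<Rightarrow> real) \<Rightarrow> 'n \<Rightarrow> 'n \<Rightarrow> 'n \<Rightarrow> 'n \<Rightarrow> real^'n \<Rightarrow> real" where
  "zeta F h i j k y =
     (1 / F y) * (Sf F h i j k y
        - Sscal F y / ((real CARD('n) - 1) * (real CARD('n) - 2))
          * (hf F i k y * hf F j h y - hf F i j y * hf F h k y))"

definition finsler :: "(real^'n) set \<Rightarrow> (real^'n \<Rightarrow> real^'n \<Rightarrow> real) \<Rightarrow> bool" where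
  "finsler U L \<longleftrightarrow>
     smooth_on (U \<times> (UNIV - {0})) (\<lambda>(x, y). L x y) \<and>
     (\<forall>x\<in>U. \<forall>y. y \<noteq> 0 \<longrightarrow> L x y > 0) \<and>
     (\<forall>x\<in>U. \<forall>y. \<forall>t::real. t > 0 \<longrightarrow> L x (t *\<^sub>R y) = t * L x y) \<and>
     (\<forall>x\<in>U. \<forall>y. y \<noteq> 0 \<longrightarrow>
        (\<forall>v. v \<noteq> 0 \<longrightarrow> v \<bullet> (gmat (L x) y *v v) > 0))"

definition Lstar :: "(real^'n \<Rightarrow> real) \<Rightarrow> (real^'n \<Rightarrow> real^'n) \<Rightarrow> (real^'n \<Rightarrow> real^'n \<Rightarrow> real)
                     \<Rightarrow> real^'n \<Rightarrow> real^'n \<Rightarrow> real" where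
  "Lstar \<sigma> b L x y = exp (\<sigma> x) * L x y + b x \<bullet> y"

text \<open>m_i = b_i - (beta/L) l_i  (for the metric F = L(x,.) and covector bx = b(x))\<close>
definition mcov :: "(real^'n \<Rightarrow> real) \<Rightarrow> real^'n \<Rightarrow> 'n \<Rightarrow> real^'n \<Rightarrow> real" where
  "mcov F bx i y = bx $ i - (bx \<bullet> y / F y) * lcov F i y"

definition msq :: "(real^'n \<Rightarrow> real) \<Rightarrow> real^'n \<Rightarrow> real^'n \<Rightarrow> real" where
  "msq F bx y = (\<Sum>i\<in>UNIV. \<Sum>j\<in>UNIV. ginv F i j y * mcov F bx i y * mcov F bx j y)"

definition cbeta :: "(real^'n \<Rightarrow> real) \<Rightarrow> real^'n \<Rightarrow> real^'n \<Rightarrow> real" where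
  "cbeta F bx y = (\<Sum>i\<in>UNIV. cvec F i y * (\<Sum>j\<in>UNIV. ginv F i j y * bx $ j))"

definition Abeta :: "(real^'n \<Rightarrow> real) \<Rightarrow> (real^'n \<Rightarrow> real) \<Rightarrow> real^'n \<Rightarrow> real^'n \<Rightarrow> real" where
  "Abeta F Ls bx y = cbeta F bx y + (real CARD('n) + 1) / (4 * Ls y) * msq F bx y"

definition Hf :: "(real^'n \<Rightarrow> real) \<Rightarrow> (real^'n \<Rightarrow> real) \<Rightarrow> real^'n \<Rightarrow> 'n \<Rightarrow> 'n \<Rightarrow> real^'n \<Rightarrow> real" where
  "Hf F Ls bx i j y =
     (\<Sum>r\<in>UNIV. cmix F i r j y * mcov F bx r y)
     + 1 / (2 * Ls y) * mcov F bx i y * mcov F bx j y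
     + 1 / (4 * Ls y) * hf F i j y * msq F bx y"

end

theory Submission
  imports Defs
begin

(* At a fixed point (x, y) every quantity in the statement is an algebraic expression in the fibre
   jets of L up to order three, and by Euler's identities all the tensors involved annihilate y.
   With p = e^sigma *L / L and m_i = b_i - (beta/L) l_i, the Cartan tensor of *L is
   *c_ijk = p c_ijk + p/(2 *L) (h_ik m_j + h_jk m_i + h_ij m_k) and *h_ij = p h_ij, while on a
   covector u annihilating y the inverse of *g_ij = p h_ij + *l_i *l_j acts as
   u |-> (g^-1 u - (m^r u_r / *L) y) / p.
   Hence *S_hijk = p S_hijk + p/(2 *L) (h o H)_hijk, where h o W denotes the Kulkarni-Nomizu
   product; tracing twice gives A_beta = tr H and *zeta - e^sigma zeta = e^sigma/(2 L *L) (h o K),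
   where K is the trace-free part of H. Contracting h o K with g^-1 gives -(n - 3) K, so for n > 3
   the product vanishes exactly when K does. *)

section \<open>Vectors and matrices over a finite index type\<close>

definition dotv :: "('n::finite \<Rightarrow> real) \<Rightarrow> ('n \<Rightarrow> real) \<Rightarrow> real" where
  "dotv u v = (\<Sum>i\<in>UNIV. u i * v i)"

definition matv :: "('n::finite \<Rightarrow> 'n \<Rightarrow> real) \<Rightarrow> ('n \<Rightarrow> real) \<Rightarrow> 'n \<Rightarrow> real" where
  "matv M u = (\<lambda>a. \<Sum>b\<in>UNIV. M a b * u b)"

lemma dotv_commute: "dotv u v = dotv v u"
  by (simp add: dotv_def mult.commute)

lemma dotv_linear_left [simp]:
  "dotv (\<lambda>i. u i + v i) w = dotv u w + dotv v w"
  "dotv (\<lambda>i. u i - v i) w = dotv u w - dotv v w"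
  "dotv (\<lambda>i. - u i) w = - dotv u w"
  "dotv (\<lambda>i. a * u i) w = a * dotv u w"
  "dotv (\<lambda>i. u i * a) w = a * dotv u w"
  "dotv (\<lambda>i. u i / a) w = dotv u w / a"
  "dotv (\<lambda>i. 0) w = 0"
  by (simp_all add: dotv_def algebra_simps sum.distrib sum_subtractf sum_negf
      sum_distrib_left sum_divide_distrib)

lemma dotv_linear_right [simp]:
  "dotv w (\<lambda>i. u i + v i) = dotv w u + dotv w v"
  "dotv w (\<lambda>i. u i - v i) = dotv w u - dotv w v"
  "dotv w (\<lambda>i. - u i) = - dotv w u"
  "dotv w (\<lambda>i. a * u i) = a * dotv w u"
  "dotv w (\<lambda>i. u i * a) = a * dotv w u"
  "dotv w (\<lambda>i. u i / a) = dotv w u / a"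
  "dotv w (\<lambda>i. 0) = 0"
  by (simp_all add: dotv_commute[of w])

lemma dotv_delta [simp]:
  "dotv (\<lambda>i. if i = a then 1 else 0) w = w a"
  "dotv (\<lambda>i. if a = i then 1 else 0) w = w a"
  "dotv w (\<lambda>i. if i = a then 1 else 0) = w a"
  "dotv w (\<lambda>i. if a = i then 1 else 0) = w a"
  by (simp_all add: dotv_def if_distrib if_distribR cong: if_cong)

lemma dotv_sum_right: "dotv w (\<lambda>r. \<Sum>a\<in>UNIV. U a r) = (\<Sum>a\<in>UNIV. dotv w (U a))"
  unfolding dotv_def by (simp add: sum_distrib_left) (rule sum.swap)

lemma matv_apply: "matv M u a = dotv (M a) u"
  by (simp add: matv_def dotv_def)

lemma matv_linear [simp]:
  "matv M (\<lambda>i. u i + v i) = (\<lambda>a. matv M u a + matv M v a)"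
  "matv M (\<lambda>i. u i - v i) = (\<lambda>a. matv M u a - matv M v a)"
  "matv M (\<lambda>i. c * u i) = (\<lambda>a. c * matv M u a)"
  "matv M (\<lambda>i. u i * c) = (\<lambda>a. c * matv M u a)"
  "matv M (\<lambda>i. u i / c) = (\<lambda>a. matv M u a / c)"
  "matv M (\<lambda>i. 0) = (\<lambda>a. 0)"
  by (simp_all add: matv_apply[abs_def])

lemma dotv_matv: "dotv w (matv M u) = dotv (\<lambda>b. dotv w (\<lambda>a. M a b)) u"
  unfolding dotv_def matv_def
  by (simp add: sum_distrib_left sum_distrib_right mult_ac) (rule sum.swap)

lemma matv_sum: "matv M (\<lambda>s. \<Sum>a\<in>UNIV. U a s) = (\<lambda>r. \<Sum>a\<in>UNIV. matv M (U a) r)"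
  by (simp add: matv_apply[abs_def] dotv_sum_right)

section \<open>Vertical curvature of an abstract Cartan tensor\<close>

(* The quantities of theory Defs, computed from the values of g^ij, c_ijk, h_ij, ... at one
   point rather than from a function of y. *)

definition cmix_of :: "('n::finite \<Rightarrow> 'n \<Rightarrow> real) \<Rightarrow> ('n \<Rightarrow> 'n \<Rightarrow> 'n \<Rightarrow> real) \<Rightarrow> 'n \<Rightarrow> 'n \<Rightarrow> 'n \<Rightarrow> real" where
  "cmix_of G c i r j = (\<Sum>k\<in>UNIV. G r k * c i j k)"

definition S_of :: "('n::finite \<Rightarrow> 'n \<Rightarrow> real) \<Rightarrow> ('n \<Rightarrow> 'n \<Rightarrow> 'n \<Rightarrow> real) \<Rightarrow> 'n \<Rightarrow> 'n \<Rightarrow> 'n \<Rightarrow> 'n \<Rightarrow> real" where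
  "S_of G c h i j k = (\<Sum>r\<in>UNIV. c i j r * cmix_of G c h r k - c i k r * cmix_of G c h r j)"

definition Sric_of :: "('n::finite \<Rightarrow> 'n \<Rightarrow> real) \<Rightarrow> ('n \<Rightarrow> 'n \<Rightarrow> 'n \<Rightarrow> real) \<Rightarrow> 'n \<Rightarrow> 'n \<Rightarrow> real" where
  "Sric_of G c i k = (\<Sum>h\<in>UNIV. \<Sum>j\<in>UNIV. G h j * S_of G c h i j k)"

definition Sscal_of :: "('n::finite \<Rightarrow> 'n \<Rightarrow> real) \<Rightarrow> ('n \<Rightarrow> 'n \<Rightarrow> 'n \<Rightarrow> real) \<Rightarrow> real" where
  "Sscal_of G c = (\<Sum>i\<in>UNIV. \<Sum>k\<in>UNIV. G i k * Sric_of G c i k)"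

definition zeta_of :: "real \<Rightarrow> ('n::finite \<Rightarrow> 'n \<Rightarrow> real) \<Rightarrow> ('n \<Rightarrow> 'n \<Rightarrow> 'n \<Rightarrow> real) \<Rightarrow> ('n \<Rightarrow> 'n \<Rightarrow> real)
    \<Rightarrow> 'n \<Rightarrow> 'n \<Rightarrow> 'n \<Rightarrow> 'n \<Rightarrow> real" where
  "zeta_of L G c h\<^sub>0 h i j k = (1 / L) * (S_of G c h i j k
      - Sscal_of G c / ((real CARD('n) - 1) * (real CARD('n) - 2))
        * (h\<^sub>0 i k * h\<^sub>0 j h - h\<^sub>0 i j * h\<^sub>0 h k))"

definition msq_of :: "('n::finite \<Rightarrow> 'n \<Rightarrow> real) \<Rightarrow> ('n \<Rightarrow> real) \<Rightarrow> real" where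
  "msq_of G m = (\<Sum>i\<in>UNIV. \<Sum>j\<in>UNIV. G i j * m i * m j)"

definition H_of :: "('n::finite \<Rightarrow> 'n \<Rightarrow> real) \<Rightarrow> ('n \<Rightarrow> 'n \<Rightarrow> 'n \<Rightarrow> real) \<Rightarrow> ('n \<Rightarrow> 'n \<Rightarrow> real)
    \<Rightarrow> ('n \<Rightarrow> real) \<Rightarrow> real \<Rightarrow> 'n \<Rightarrow> 'n \<Rightarrow> real" where
  "H_of G c h\<^sub>0 m Ls i j = (\<Sum>r\<in>UNIV. cmix_of G c i r j * m r)
     + 1 / (2 * Ls) * m i * m j + 1 / (4 * Ls) * h\<^sub>0 i j * msq_of G m"

definition cvec_of :: "('n::finite \<Rightarrow> 'n \<Rightarrow> real) \<Rightarrow> ('n \<Rightarrow> 'n \<Rightarrow> 'n \<Rightarrow> real) \<Rightarrow> 'n \<Rightarrow> real" where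
  "cvec_of G c i = (\<Sum>j\<in>UNIV. \<Sum>k\<in>UNIV. G j k * c i j k)"

definition Abeta_of :: "('n::finite \<Rightarrow> 'n \<Rightarrow> real) \<Rightarrow> ('n \<Rightarrow> 'n \<Rightarrow> 'n \<Rightarrow> real) \<Rightarrow> ('n \<Rightarrow> real)
    \<Rightarrow> ('n \<Rightarrow> real) \<Rightarrow> real \<Rightarrow> real" where
  "Abeta_of G c b m Ls = (\<Sum>i\<in>UNIV. cvec_of G c i * (\<Sum>j\<in>UNIV. G i j * b j))
     + (real CARD('n) + 1) / (4 * Ls) * msq_of G m"

lemma S_of_dotv: "S_of G c h i j k = dotv (c i j) (matv G (c h k)) - dotv (c i k) (matv G (c h j))"
  by (simp add: S_of_def cmix_of_def dotv_def matv_def sum_subtractf)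

lemma dotv_exchange:
  "dotv w (\<lambda>h. dotv u (V h)) = dotv u (\<lambda>s. dotv w (\<lambda>h. V h s))"
  "dotv w (\<lambda>i. dotv (U i) v) = dotv (\<lambda>r. dotv w (\<lambda>i. U i r)) v"
  "(\<lambda>s. dotv w (\<lambda>h. matv G (V h) s)) = matv G (\<lambda>t. dotv w (\<lambda>h. V h t))"
  unfolding dotv_def matv_def
  by (simp_all add: sum_distrib_left sum_distrib_right mult_ac) (rule sum.swap, rule sum.swap, rule ext, rule sum.swap)

lemma S_of_transversal:
  assumes c1: "\<And>a b. dotv y (\<lambda>h. c h a b) = 0" and c2: "\<And>a b. dotv y (\<lambda>h. c a h b) = 0"
  shows "dotv y (\<lambda>h. S_of G c h i j k) = 0" and "dotv y (\<lambda>i. S_of G c h i j k) = 0"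
    and "dotv y (\<lambda>j. S_of G c h i j k) = 0" and "dotv y (\<lambda>k. S_of G c h i j k) = 0"
proof -
  have z1: "matv G (\<lambda>t. dotv y (\<lambda>h. c h a t)) = (\<lambda>r. 0)"
    and z2: "matv G (\<lambda>t. dotv y (\<lambda>h. c a h t)) = (\<lambda>r. 0)"
    and z3: "(\<lambda>r. dotv y (\<lambda>i. c i a r)) = (\<lambda>r. 0)"
    and z4: "(\<lambda>r. dotv y (\<lambda>i. c a i r)) = (\<lambda>r. 0)" for a
    using c1 c2 by simp_all
  show "dotv y (\<lambda>h. S_of G c h i j k) = 0"
    by (simp add: S_of_dotv dotv_exchange(1,3) z1)
  show "dotv y (\<lambda>i. S_of G c h i j k) = 0"
    by (simp add: S_of_dotv dotv_exchange(2) z3)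
  show "dotv y (\<lambda>j. S_of G c h i j k) = 0" "dotv y (\<lambda>k. S_of G c h i j k) = 0"
    by (simp_all add: S_of_dotv dotv_exchange z4 z2)
qed

lemma Sric_of_transversal:
  assumes "\<And>a b. dotv y (\<lambda>h. c h a b) = 0" and "\<And>a b. dotv y (\<lambda>h. c a h b) = 0"
  shows "dotv y (\<lambda>k. Sric_of G c i k) = 0" and "dotv y (\<lambda>i. Sric_of G c i k) = 0"
  unfolding Sric_of_def by (simp_all add: dotv_sum_right S_of_transversal[OF assms])

section \<open>Pointwise algebra of a Minkowski norm\<close>

(* The fibre jets of L(x, .) at y: L = L(x, y), l i = l_i, P i j = dl_i/dy^j (so that
   h_ij = L P_ij), Q i j k = d^2 l_i/dy^j dy^k, and gi = g^ij. *)
locale minkowski_jet =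
  fixes y :: "'n::finite \<Rightarrow> real" and L :: real and l :: "'n \<Rightarrow> real"
    and P :: "'n \<Rightarrow> 'n \<Rightarrow> real" and Q :: "'n \<Rightarrow> 'n \<Rightarrow> 'n \<Rightarrow> real" and gi :: "'n \<Rightarrow> 'n \<Rightarrow> real"
  assumes L_pos: "L > 0"
    and P_sym: "P i j = P j i" and Q_sym1: "Q i j k = Q j i k" and Q_sym2: "Q i j k = Q i k j"
    and euler_l: "dotv l y = L" and euler_P: "dotv (P i) y = 0" and euler_Q: "dotv (Q i j) y = - P i j"
    and gi_left: "(\<Sum>k\<in>UNIV. gi i k * (l k * l j + L * P k j)) = (if i = j then 1 else 0)"
    and gi_right: "(\<Sum>k\<in>UNIV. (l i * l k + L * P i k) * gi k j) = (if i = j then 1 else 0)"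
begin

definition "g i j = l i * l j + L * P i j"
definition "ang i j = L * P i j"
definition "c i j k = (P i k * l j + l i * P j k + l k * P i j + L * Q i j k) / 2"
definition "ginner u v = dotv u (matv gi v)"
definition "gtrace W = (\<Sum>a\<in>UNIV. \<Sum>b\<in>UNIV. gi a b * W a b)"
definition "ang_kn W h i j k = ang h k * W i j + ang i j * W h k - ang h j * W i k - ang i k * W h j"

lemma L_nonzero [simp]: "L \<noteq> 0"
  using L_pos by simp

lemma g_sym: "g i j = g j i"
  by (simp add: g_def P_sym mult.commute)

lemma gi_dotv_g:
  "dotv (gi i) (\<lambda>k. g k j) = (if i = j then 1 else 0)"
  "dotv (g i) (\<lambda>k. gi k j) = (if i = j then 1 else 0)"
  unfolding dotv_def g_def by (rule gi_left, rule gi_right)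

lemma gi_sym: "gi a b = gi b a"
proof -
  have gk: "g k = (\<lambda>j. g j k)" for k
    by (rule ext) (simp add: g_sym)
  have "gi b a = dotv (\<lambda>m. dotv (gi a) (\<lambda>k. g k m)) (gi b)"
    by (simp add: gi_dotv_g)
  also have "\<dots> = dotv (gi a) (\<lambda>k. dotv (g k) (gi b))"
    by (simp add: dotv_matv[symmetric] matv_apply[abs_def])
  also have "\<dots> = gi a b"
    by (subst gk) (simp add: dotv_commute[of _ "gi b"] gi_dotv_g)
  finally show ?thesis by simp
qed

lemma gi_column: "(\<lambda>k. gi k i) = gi i"
  by (rule ext) (rule gi_sym)

lemma gi_dotv_l: "dotv (gi i) l = y i / L"
proof -
  have "l = (\<lambda>k. dotv (g k) y / L)"
    by (simp add: g_def[abs_def] euler_l euler_P mult.commute)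
  then have "dotv (gi i) l = dotv (gi i) (\<lambda>k. dotv (g k) y / L)"
    by simp
  also have "\<dots> = dotv (gi i) (matv g y) / L"
    by (simp add: matv_apply[abs_def])
  also have "\<dots> = y i / L"
    by (simp add: dotv_matv gi_dotv_g)
  finally show ?thesis .
qed

lemma ang_sym: "ang i j = ang j i"
  by (simp add: ang_def P_sym)

lemma ang_eq: "ang i j = g i j - l i * l j"
  by (simp add: ang_def g_def)

lemma ang_transversal: "dotv (ang i) y = 0" "dotv y (ang i) = 0" "dotv y (\<lambda>a. ang a i) = 0"
  by (simp_all add: ang_def[abs_def] euler_P dotv_commute[of y] ang_sym[of _ i] P_sym[of _ i])

lemma gi_dotv_ang: "dotv (gi j) (\<lambda>h. ang h k) = (if j = k then 1 else 0) - y j * l k / L"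
  by (simp add: ang_eq gi_dotv_g gi_dotv_l)

lemma dotv_gi_transversal:
  assumes "dotv u y = 0"
  shows "dotv l (matv gi u) = 0" and "dotv (ang a) (matv gi u) = u a"
proof -
  have "dotv l (matv gi u) = dotv (\<lambda>b. y b / L) u"
    by (simp add: dotv_matv dotv_commute[of l] gi_column gi_dotv_l)
  then show l: "dotv l (matv gi u) = 0"
    using assms by (simp add: dotv_commute[of y])
  have "dotv (ang a) (matv gi u) = dotv (g a) (matv gi u) - l a * dotv l (matv gi u)"
    by (simp add: ang_eq[abs_def])
  also have "dotv (g a) (matv gi u) = u a"
    by (simp add: dotv_matv gi_dotv_g)
  finally show "dotv (ang a) (matv gi u) = u a"
    using l by simp
qed

lemma ginner_sym: "ginner u v = ginner v u"
proof -
  have "ginner u v = dotv (\<lambda>b. dotv (gi b) u) v"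
    by (simp add: ginner_def dotv_matv gi_column dotv_commute[of u])
  then show ?thesis
    by (simp add: ginner_def dotv_commute[of _ v] matv_apply[abs_def])
qed

lemma ginner_linear [simp]:
  "ginner (\<lambda>r. u r + v r) w = ginner u w + ginner v w"
  "ginner w (\<lambda>r. u r + v r) = ginner w u + ginner w v"
  "ginner (\<lambda>r. a * u r) w = a * ginner u w"
  "ginner w (\<lambda>r. a * u r) = a * ginner w u"
  "ginner (\<lambda>r. u r * a) w = a * ginner u w"
  "ginner w (\<lambda>r. u r * a) = a * ginner w u"
  by (simp_all add: ginner_def)

lemma ginner_ang:
  assumes "dotv u y = 0"
  shows "ginner (ang a) u = u a" and "ginner u (ang a) = u a"
  using dotv_gi_transversal(2)[OF assms] ginner_sym by (simp_all add: ginner_def)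

lemma c_sym: "c i j k = c j i k" "c i j k = c i k j"
  by (simp add: c_def P_sym Q_sym1[of i j k] algebra_simps,
      simp add: c_def P_sym Q_sym2[of i j k] algebra_simps)

lemma c_slots: "(\<lambda>k. c k i j) = c i j" "(\<lambda>k. c i k j) = c i j"
  by (rule ext, metis c_sym)+

lemma c_transversal: "dotv (c i j) y = 0"
  by (simp add: c_def[abs_def] euler_l euler_P euler_Q algebra_simps)

lemma gtrace_linear [simp]:
  "gtrace (\<lambda>a b. X a b + Y a b) = gtrace X + gtrace Y"
  "gtrace (\<lambda>a b. X a b - Y a b) = gtrace X - gtrace Y"
  "gtrace (\<lambda>a b. - X a b) = - gtrace X"
  "gtrace (\<lambda>a b. t * X a b) = t * gtrace X"
  "gtrace (\<lambda>a b. X a b * t) = gtrace X * t"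
  "gtrace (\<lambda>a b. X a b / t) = gtrace X / t"
  "gtrace (\<lambda>a b. 0) = 0"
  unfolding gtrace_def
  by (simp_all add: algebra_simps sum.distrib sum_subtractf sum_negf sum_distrib_left sum_distrib_right
      sum_divide_distrib)

lemma gtrace_ang: "gtrace ang = real CARD('n) - 1"
proof -
  have "gtrace ang = (\<Sum>h\<in>UNIV. dotv (gi h) (\<lambda>j. ang j h))"
    by (simp add: gtrace_def dotv_def ang_sym[of _ ])
  also have "\<dots> = (\<Sum>h\<in>UNIV. 1 - y h * l h / L)"
    by (simp add: gi_dotv_ang)
  also have "\<dots> = real CARD('n) - dotv y l / L"
    by (simp add: sum_subtractf dotv_def sum_divide_distrib)
  finally show ?thesis by (simp add: dotv_commute[of y] euler_l)
qed

lemma gtrace_ang_kn: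
  assumes rows: "\<And>a. dotv y (W a) = 0" and cols: "\<And>b. dotv y (\<lambda>a. W a b) = 0"
  shows "gtrace (\<lambda>h j. ang_kn W h i j k) = - (real CARD('n) - 3) * W i k - ang i k * gtrace W"
proof -
  have T1: "gtrace (\<lambda>h j. ang h k * W i j) = W i k"
  proof -
    have "gtrace (\<lambda>h j. ang h k * W i j) = (\<Sum>j\<in>UNIV. W i j * dotv (gi j) (\<lambda>h. ang h k))"
      unfolding gtrace_def
      by (subst sum.swap, rule sum.cong) (simp_all add: dotv_def sum_distrib_left gi_sym mult_ac)
    also have "\<dots> = W i k"
      using rows[of i] by (simp add: gi_dotv_ang dotv_def[symmetric] dotv_commute[of y])
    finally show ?thesis .
  qed
  have T2: "gtrace (\<lambda>h j. ang i j * W h k) = W i k"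
  proof -
    have "gtrace (\<lambda>h j. ang i j * W h k) = (\<Sum>h\<in>UNIV. W h k * dotv (gi h) (\<lambda>j. ang j i))"
      by (simp add: gtrace_def dotv_def sum_distrib_left ang_sym[of i] mult_ac)
    also have "\<dots> = W i k"
      using cols[of k] by (simp add: gi_dotv_ang dotv_def[symmetric] dotv_commute[of y])
    finally show ?thesis .
  qed
  have "gtrace (\<lambda>h j. ang_kn W h i j k)
      = gtrace (\<lambda>h j. ang h k * W i j) + gtrace (\<lambda>h j. ang i j * W h k)
        - gtrace ang * W i k - ang i k * gtrace W"
    by (simp add: ang_kn_def)
  also have "\<dots> = W i k + W i k - (real CARD('n) - 1) * W i k - ang i k * gtrace W"
    by (simp only: T1 T2 gtrace_ang)
  finally show ?thesis
    by (simp add: algebra_simps)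
qed

end

section \<open>Pointwise algebra of the conformal beta-change\<close>

(* e = e^sigma(x), bv i = b_i(x), gsi = *g^ij; the quantities of *L carry the suffix s. *)
locale conformal_beta_jet = minkowski_jet y L l P Q gi
  for y :: "'n::finite \<Rightarrow> real" and L l P Q gi +
  fixes e :: real and bv :: "'n \<Rightarrow> real" and gsi :: "'n \<Rightarrow> 'n \<Rightarrow> real"
  assumes e_pos: "e > 0" and Lstar_pos: "e * L + dotv bv y > 0"
    and gsi_left: "(\<Sum>k\<in>UNIV. gsi i k * ((e * l k + bv k) * (e * l j + bv j) + (e * L + dotv bv y) * (e * P k j)))
      = (if i = j then 1 else 0)"
begin

definition "beta = dotv bv y"
definition "Ls = e * L + beta"
definition "ls i = e * l i + bv i"
definition "gs i j = ls i * ls j + Ls * (e * P i j)"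
definition "hs i j = Ls * (e * P i j)"
definition "cs i j k = (e * P i k * ls j + ls i * (e * P j k) + ls k * (e * P i j) + Ls * (e * Q i j k)) / 2"
definition "m i = bv i - (beta / L) * l i"
definition "m2 = ginner m m"
definition "H i j = ginner (c i j) m + m i * m j / (2 * Ls) + ang i j * m2 / (4 * Ls)"
definition "p = e * Ls / L"

lemma Ls_pos: "Ls > 0"
  using Lstar_pos by (simp add: Ls_def beta_def)

lemma nonzero [simp]: "Ls \<noteq> 0" "p \<noteq> 0" "e \<noteq> 0"
  using Ls_pos L_pos e_pos by (simp_all add: p_def)

lemma gsi_dotv_gs: "dotv (gsi i) (\<lambda>k. gs k j) = (if i = j then 1 else 0)"
  using gsi_left[of i j] by (simp only: dotv_def gs_def ls_def Ls_def beta_def)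

lemma hs_eq: "hs i j = p * ang i j"
  by (simp add: hs_def p_def ang_def)

lemma m_transversal: "dotv m y = 0"
  by (simp add: m_def[abs_def] beta_def euler_l)

lemma ls_eq: "ls a = (Ls / L) * l a + m a"
  by (simp add: ls_def m_def Ls_def field_simps)

lemma cs_eq: "cs i j k = p * c i j k + p / (2 * Ls) * (ang i k * m j + m i * ang j k + m k * ang i j)"
  unfolding cs_def c_def ang_def p_def ls_eq by (simp add: field_simps)

lemma cs_sym: "cs i j k = cs j i k" "cs i j k = cs i k j"
  by (simp add: cs_eq c_sym(1)[of i j k] ang_sym algebra_simps,
      simp add: cs_eq c_sym(2)[of i j k] ang_sym algebra_simps)

lemma cs_slots: "(\<lambda>k. cs k i j) = cs i j" "(\<lambda>k. cs i k j) = cs i j"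
  by (rule ext, metis cs_sym)+

lemma cs_transversal: "dotv (cs i j) y = 0"
  by (simp add: cs_eq[abs_def] c_transversal ang_transversal m_transversal)

lemma gsi_matv:
  assumes u: "dotv u y = 0"
  shows "matv gsi u a = (matv gi u a - ginner m u / Ls * y a) / p"
proof -
  define w where "w = (\<lambda>k. (matv gi u k - ginner m u / Ls * y k) / p)"
  have gs_eq: "gs a' = (\<lambda>k. ls a' * ((Ls / L) * l k + m k) + p * ang a' k)" for a'
    by (rule ext) (simp add: gs_def ls_def m_def ang_def p_def Ls_def field_simps)
  have gs_w: "dotv (gs a') w = u a'" for a'
  proof -
    have "dotv (gs a') w = ls a' * ((Ls / L) * dotv l w + dotv m w) + p * dotv (ang a') w"
      by (simp add: gs_eq)
    also have "dotv l w = (- ginner m u / Ls * L) / p"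
      by (simp add: w_def dotv_gi_transversal(1)[OF u] euler_l dotv_commute[of l y])
    also have "dotv m w = ginner m u / p"
      by (simp add: w_def m_transversal dotv_commute[of m y] ginner_def)
    also have "dotv (ang a') w = u a' / p"
      by (simp add: w_def dotv_gi_transversal(2)[OF u] ang_transversal)
    finally show ?thesis by (simp add: field_simps)
  qed
  have "matv gsi u a = dotv (gsi a) (matv gs w)"
    by (simp add: gs_w matv_apply[abs_def] matv_apply[of gsi])
  also have "\<dots> = w a"
    by (simp add: dotv_matv gsi_dotv_gs)
  finally show ?thesis by (simp add: w_def)
qed

lemma dotv_gsi_transversal:
  assumes u: "dotv u y = 0" and v: "dotv v y = 0"
  shows "dotv u (matv gsi v) = ginner u v / p"
  using u by (simp add: gsi_matv[OF v, abs_def] ginner_def)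

lemma gstrace_transversal:
  assumes rows: "\<And>a. dotv (T a) y = 0" and cols: "\<And>b. dotv (\<lambda>a. T a b) y = 0"
  shows "(\<Sum>a\<in>UNIV. \<Sum>b\<in>UNIV. gsi a b * T a b) = gtrace T / p"
proof -
  have "(\<Sum>a\<in>UNIV. \<Sum>b\<in>UNIV. gsi a b * T a b) = (\<Sum>a\<in>UNIV. matv gsi (T a) a)"
    by (simp add: matv_def)
  also have "\<dots> = ((\<Sum>a\<in>UNIV. matv gi (T a) a) - (\<Sum>a\<in>UNIV. y a * ginner m (T a)) / Ls) / p"
    by (simp add: gsi_matv[OF rows] sum_divide_distrib[symmetric] sum_subtractf algebra_simps)
  also have "(\<Sum>a\<in>UNIV. y a * ginner m (T a)) = ginner m (\<lambda>s. \<Sum>a\<in>UNIV. y a * T a s)"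
    by (simp add: ginner_def dotv_sum_right matv_sum)
  also have "(\<lambda>s. \<Sum>a\<in>UNIV. y a * T a s) = (\<lambda>s. 0)"
    using cols by (simp add: dotv_def mult.commute)
  finally show ?thesis
    by (simp add: ginner_def gtrace_def matv_def)
qed

lemma H_transversal: "dotv y (H a) = 0" "dotv y (\<lambda>a. H a b) = 0"
proof -
  have "dotv y (\<lambda>b. ginner (c a b) m) = 0" "dotv y (\<lambda>a. ginner (c a b) m) = 0"
    using c_transversal c_slots
    by (simp_all add: ginner_def dotv_exchange(2) dotv_commute[of y])
  then show "dotv y (H a) = 0" "dotv y (\<lambda>a. H a b) = 0"
    by (simp_all add: H_def[abs_def] ang_transversal m_transversal dotv_commute[of y m])
qed

lemma S_of_star: "S_of gsi cs h i j k = p * (S_of gi c h i j k + ang_kn H h i j k / (2 * Ls))"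
proof -
  have star: "S_of gsi cs h i j k = (ginner (cs i j) (cs h k) - ginner (cs i k) (cs h j)) / p"
    by (simp add: S_of_dotv dotv_gsi_transversal cs_transversal diff_divide_distrib)
  have base: "S_of gi c h i j k = ginner (c i j) (c h k) - ginner (c i k) (c h j)"
    by (simp add: S_of_dotv ginner_def)
  have cs_fun: "cs i j = (\<lambda>r. p * c i j r + p / (2 * Ls) * (ang i r * m j + m i * ang j r + m r * ang i j))"
    for i j by (rule ext) (rule cs_eq)
  have vals: "ginner (c i j) (ang a) = c i j a" "ginner (ang a) (c i j) = c i j a"
    "ginner (ang a) (ang b) = ang a b" "ginner (ang a) m = m a" "ginner m (ang a) = m a"
    "ginner m (c i j) = ginner (c i j) m" "ginner m m = m2" for i j a b
    by (rule ginner_ang(2)[OF c_transversal] ginner_ang(1)[OF c_transversal]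
        trans[OF ginner_ang(1)[OF ang_transversal(1)] ang_sym] ginner_ang(1)[OF m_transversal]
        ginner_ang(2)[OF m_transversal] ginner_sym m2_def[symmetric])+
  have c_perm: "c i k j = c i j k" "c h j i = c i j h" "c i k h = c h k i" "c h j k = c h k j"
    by (metis c_sym)+
  show ?thesis
    unfolding star base cs_fun
    by (simp only: ginner_linear vals)
      (simp add: c_perm ang_sym[of j h] ang_sym[of k h] ang_sym[of k i] ang_sym[of k j]
        H_def ang_kn_def field_simps)
qed

lemma msq_of_m: "msq_of gi m = m2"
  by (simp add: msq_of_def m2_def ginner_def dotv_def matv_def sum_distrib_left mult_ac)

lemma H_of_eq: "H_of gi c ang m Ls i j = H i j"
proof -
  have "(\<Sum>r\<in>UNIV. cmix_of gi c i r j * m r) = ginner m (c i j)"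
    by (simp add: cmix_of_def ginner_def dotv_def matv_def mult_ac)
  then show ?thesis
    by (simp add: H_of_def H_def msq_of_m ginner_sym[of m])
qed

lemma cvec_of_contraction: "(\<Sum>i\<in>UNIV. cvec_of gi c i * z i) = gtrace (\<lambda>a b. dotv (c a b) z)"
proof -
  have "(\<Sum>i\<in>UNIV. cvec_of gi c i * z i) = (\<Sum>i\<in>UNIV. \<Sum>a\<in>UNIV. \<Sum>b\<in>UNIV. gi a b * (c i a b * z i))"
    by (simp add: cvec_of_def sum_distrib_left sum_distrib_right mult_ac)
  also have "\<dots> = (\<Sum>a\<in>UNIV. \<Sum>i\<in>UNIV. \<Sum>b\<in>UNIV. gi a b * (c i a b * z i))"
    by (rule sum.swap)
  also have "\<dots> = (\<Sum>a\<in>UNIV. \<Sum>b\<in>UNIV. \<Sum>i\<in>UNIV. gi a b * (c i a b * z i))"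
    by (rule sum.cong[OF refl]) (rule sum.swap)
  also have "\<dots> = gtrace (\<lambda>a b. dotv (\<lambda>i. c i a b) z)"
    by (simp add: gtrace_def dotv_def sum_distrib_left)
  finally show ?thesis
    by (simp add: c_slots(1))
qed

lemma Abeta_of_eq: "Abeta_of gi c bv m Ls = gtrace H"
proof -
  have bv_eq: "(\<Sum>j\<in>UNIV. gi i j * bv j) = matv gi m i + beta / L * (y i / L)" for i
  proof -
    have bv_m: "bv = (\<lambda>j. m j + beta / L * l j)"
      by (simp add: m_def)
    have "dotv (gi i) bv = dotv (gi i) m + beta / L * dotv (gi i) l"
      by (subst bv_m) simp
    then show ?thesis
      by (simp add: dotv_def[symmetric] matv_apply gi_dotv_l)
  qed
  have "(\<Sum>i\<in>UNIV. cvec_of gi c i * (\<Sum>j\<in>UNIV. gi i j * bv j))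
      = gtrace (\<lambda>a b. dotv (c a b) (\<lambda>i. matv gi m i + beta / L * (y i / L)))"
    by (simp only: bv_eq cvec_of_contraction)
  also have "\<dots> = gtrace (\<lambda>a b. ginner (c a b) m)"
    by (simp add: c_transversal ginner_def)
  finally have "(\<Sum>i\<in>UNIV. cvec_of gi c i * (\<Sum>j\<in>UNIV. gi i j * bv j)) = gtrace (\<lambda>a b. ginner (c a b) m)" .
  moreover have "gtrace (\<lambda>a b. m a * m b) = m2"
    by (simp add: gtrace_def m2_def ginner_def dotv_def matv_def sum_distrib_left mult_ac)
  ultimately show ?thesis
    by (simp add: Abeta_of_def msq_of_m H_def[abs_def] gtrace_ang field_simps)
qed

lemma Sric_of_star:
  "Sric_of gsi cs i k = Sric_of gi c i k + (- (real CARD('n) - 3) * H i k - ang i k * gtrace H) / (2 * Ls)"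
proof -
  have cs1: "dotv y (\<lambda>h. cs h a b) = 0" and cs2: "dotv y (\<lambda>h. cs a h b) = 0" for a b
    using cs_transversal by (simp_all add: cs_slots dotv_commute[of y])
  have "Sric_of gsi cs i k = gtrace (\<lambda>h j. S_of gsi cs h i j k) / p"
    unfolding Sric_of_def
    by (rule gstrace_transversal) (simp_all add: dotv_commute[of _ y] S_of_transversal[OF cs1 cs2])
  also have "\<dots> = gtrace (\<lambda>h j. S_of gi c h i j k) + gtrace (\<lambda>h j. ang_kn H h i j k) / (2 * Ls)"
    by (simp add: S_of_star)
  also have "gtrace (\<lambda>h j. ang_kn H h i j k) = - (real CARD('n) - 3) * H i k - ang i k * gtrace H"
    by (rule gtrace_ang_kn) (simp_all add: H_transversal)
  finally show ?thesis
    by (simp add: Sric_of_def gtrace_def)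
qed

lemma Sscal_of_star: "Sscal_of gsi cs = (Sscal_of gi c - 2 * (real CARD('n) - 2) * gtrace H / (2 * Ls)) / p"
proof -
  have cs1: "dotv y (\<lambda>h. cs h a b) = 0" and cs2: "dotv y (\<lambda>h. cs a h b) = 0" for a b
    using cs_transversal by (simp_all add: cs_slots dotv_commute[of y])
  have "Sric_of gsi cs = (\<lambda>i k. Sric_of gi c i k
      + (- (real CARD('n) - 3) * H i k - ang i k * gtrace H) / (2 * Ls))"
    by (intro ext) (rule Sric_of_star)
  then have "gtrace (Sric_of gsi cs)
      = gtrace (Sric_of gi c) + (- (real CARD('n) - 3) * gtrace H - gtrace ang * gtrace H) / (2 * Ls)"
    by simp
  also have "\<dots> = Sscal_of gi c - 2 * (real CARD('n) - 2) * gtrace H / (2 * Ls)"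
    by (simp add: Sscal_of_def gtrace_def[of "Sric_of gi c"] gtrace_ang field_simps)
  moreover have "Sscal_of gsi cs = gtrace (Sric_of gsi cs) / p"
    unfolding Sscal_of_def
    by (rule gstrace_transversal) (simp_all add: dotv_commute[of _ y] Sric_of_transversal[OF cs1 cs2])
  ultimately show ?thesis
    by simp
qed

(* the trace-free part of H, where gtrace H = A_beta by Abeta_of_eq *)
definition "K i j = H i j - gtrace H / (real CARD('n) - 1) * ang i j"

lemma zeta_of_star_diff:
  assumes n: "CARD('n) > 2"
  shows "zeta_of Ls gsi cs hs h i j k - e * zeta_of L gi c ang h i j k = e / (2 * L * Ls) * ang_kn K h i j k"
proof -
  have field_identity:
    "1 / Ls * (p * (S + W / (2 * Ls)) - (T - 2 * N2 * A / (2 * Ls)) / p / (N1 * N2)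
        * (p * a * (p * b) - p * c' * (p * d)))
      - e * (1 / L * (S - T / (N1 * N2) * (a * b - c' * d)))
     = e / (2 * L * Ls) * (W + 2 * A / N1 * (a * b - c' * d))"
    if "N1 \<noteq> 0" "N2 \<noteq> 0" for S W T A N1 N2 a b c' d
    using that by (simp add: p_def field_simps)
  have "zeta_of Ls gsi cs hs h i j k - e * zeta_of L gi c ang h i j k
      = e / (2 * L * Ls) * (ang_kn H h i j k
          + 2 * gtrace H / (real CARD('n) - 1) * (ang i k * ang j h - ang i j * ang h k))"
    unfolding zeta_of_def S_of_star Sscal_of_star hs_eq
    by (rule field_identity) (use n in auto)
  also have "\<dots> = e / (2 * L * Ls) * ang_kn K h i j k"
    unfolding ang_kn_def K_def by (simp add: ang_sym[of j h] algebra_simps)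
  finally show ?thesis .
qed

lemma K_transversal: "dotv y (K a) = 0" "dotv y (\<lambda>a. K a b) = 0"
  by (simp_all add: K_def[abs_def] H_transversal ang_transversal)

lemma gtrace_K:
  assumes "CARD('n) > 1"
  shows "gtrace K = 0"
  using assms by (simp add: K_def[abs_def] gtrace_ang)

lemma ang_kn_K_eq_0_iff:
  assumes n: "CARD('n) > 3"
  shows "(\<forall>h i j k. ang_kn K h i j k = 0) \<longleftrightarrow> (\<forall>i j. K i j = 0)"
proof
  assume kn: "\<forall>h i j k. ang_kn K h i j k = 0"
  show "\<forall>i j. K i j = 0"
  proof (intro allI)
    fix i k
    have "- (real CARD('n) - 3) * K i k - ang i k * gtrace K = 0"
      using gtrace_ang_kn[of K i k] K_transversal kn by simp
    then show "K i k = 0"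
      using n gtrace_K by simp
  qed
qed (simp add: ang_kn_def)

lemma zeta_of_star_iff:
  assumes n: "CARD('n) > 3"
  shows "(\<forall>h i j k. zeta_of Ls gsi cs hs h i j k = e * zeta_of L gi c ang h i j k)
    \<longleftrightarrow> (\<forall>i j. H i j = 1 / (real CARD('n) - 1) * gtrace H * ang i j)"
proof -
  have "(\<forall>h i j k. zeta_of Ls gsi cs hs h i j k = e * zeta_of L gi c ang h i j k)
      \<longleftrightarrow> (\<forall>h i j k. ang_kn K h i j k = 0)"
    using zeta_of_star_diff[of h i j k for h i j k] n e_pos L_pos Ls_pos
    by (auto simp: eq_iff_diff_eq_0[of "zeta_of Ls gsi cs hs _ _ _ _"])
  also have "\<dots> \<longleftrightarrow> (\<forall>i j. K i j = 0)"
    using n by (rule ang_kn_K_eq_0_iff)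
  finally show ?thesis
    by (simp add: K_def)
qed

end

section \<open>Fibre derivatives\<close>

definition has_partials :: "(real^'n \<Rightarrow> real) \<Rightarrow> ('n \<Rightarrow> real^'n \<Rightarrow> real) \<Rightarrow> real^'n \<Rightarrow> bool" where
  "has_partials G G' z \<longleftrightarrow> (G has_derivative (\<lambda>v. \<Sum>i\<in>UNIV. v$i * G' i z)) (at z)"

lemma sum_axis_mult: "(\<Sum>k\<in>UNIV. axis i (1::real) $ k * G k) = G i"
proof -
  have "axis i (1::real) $ k * G k = (if k = i then G i else 0)" for k
    by (simp add: axis_def)
  then show ?thesis by simp
qed

lemma has_partials_add:
  "has_partials G G' z \<Longrightarrow> has_partials K K' z \<Longrightarrow> has_partials (\<lambda>w. G w + K w) (\<lambda>i w. G' i w + K' i w) z"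
  unfolding has_partials_def
  by (rule has_derivative_eq_rhs, rule has_derivative_add) (auto simp: algebra_simps sum.distrib)

lemma has_partials_cmult:
  "has_partials G G' z \<Longrightarrow> has_partials (\<lambda>w. a * G w) (\<lambda>i w. a * G' i w) z"
  unfolding has_partials_def
  by (rule has_derivative_eq_rhs, rule has_derivative_mult_right) (auto simp: algebra_simps sum_distrib_left)

lemma has_partials_mult:
  "has_partials G G' z \<Longrightarrow> has_partials K K' z
    \<Longrightarrow> has_partials (\<lambda>w. G w * K w) (\<lambda>i w. G' i w * K w + G w * K' i w) z"
  unfolding has_partials_def
  by (rule has_derivative_eq_rhs, rule has_derivative_mult)
    (auto simp: algebra_simps sum.distrib sum_distrib_left sum_distrib_right)

lemma has_partials_const: "has_partials (\<lambda>w. a) (\<lambda>i w. 0) z"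
  unfolding has_partials_def by simp

lemma has_partials_inner: "has_partials (\<lambda>w. b \<bullet> w) (\<lambda>i w. b $ i) z"
  unfolding has_partials_def
  by (rule has_derivative_eq_rhs, rule has_derivative_inner_right[OF has_derivative_ident])
    (simp add: inner_vec_def mult.commute)

lemma has_partials_transform:
  "has_partials G G' z \<Longrightarrow> open S \<Longrightarrow> z \<in> S \<Longrightarrow> (\<And>w. w \<in> S \<Longrightarrow> G w = K w) \<Longrightarrow> has_partials K G' z"
  unfolding has_partials_def by (rule has_derivative_transform_within_open)

lemma has_partials_unique:
  "has_partials G G' z \<Longrightarrow> (G has_derivative D) (at z) \<Longrightarrow> D (axis i 1) = G' i z"
proof -
  assume a: "has_partials G G' z" and b: "(G has_derivative D) (at z)"
  have "D = (\<lambda>v. \<Sum>i\<in>UNIV. v$i * G' i z)"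
    using has_derivative_unique[OF b a[unfolded has_partials_def]] .
  then show ?thesis by (simp add: sum_axis_mult)
qed

lemma has_partials_line:
  assumes "has_partials G G' (p + s *\<^sub>R v)"
  shows "((\<lambda>s. G (p + s *\<^sub>R v)) has_real_derivative (\<Sum>k\<in>UNIV. v$k * G' k (p + s *\<^sub>R v))) (at s)"
proof -
  have l: "((\<lambda>s. p + s *\<^sub>R v) has_derivative (\<lambda>t. t *\<^sub>R v)) (at s)"
    by (auto intro!: derivative_eq_intros)
  have "((\<lambda>s. G (p + s *\<^sub>R v)) has_derivative (\<lambda>t. \<Sum>k\<in>UNIV. (t *\<^sub>R v)$k * G' k (p + s *\<^sub>R v))) (at s)"
    using has_derivative_compose[OF l assms[unfolded has_partials_def]] .
  then show ?thesis unfolding has_field_derivative_def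
    by (rule has_derivative_eq_rhs) (auto simp: sum_distrib_left mult_ac intro!: ext)
qed

lemma dy_eq_partial:
  assumes "has_partials G G' z"
  shows "dy G i z = G' i z"
proof -
  have "((\<lambda>s. G (z + s *\<^sub>R axis i 1)) has_real_derivative G' i z) (at 0)"
    using has_partials_line[of G G' z 0 "axis i 1"] assms by (simp add: sum_axis_mult)
  then show ?thesis
    unfolding dy_def by (rule DERIV_imp_deriv)
qed

lemma linear_vec_expansion:
  fixes f :: "real^'n \<Rightarrow> real"
  assumes "linear f"
  shows "f v = (\<Sum>i\<in>UNIV. v$i * f (axis i 1))"
proof -
  have "v = (\<Sum>i\<in>UNIV. v$i *\<^sub>R axis i 1)"
    using basis_expansion[of v] by (simp add: scalar_mult_eq_scaleR)
  then have "f v = f (\<Sum>i\<in>UNIV. v$i *\<^sub>R axis i 1)"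
    by simp
  also have "\<dots> = (\<Sum>i\<in>UNIV. v$i * f (axis i 1))"
    using assms by (simp add: linear_sum linear_scale)
  finally show ?thesis .
qed

definition fibre_partial :: "((real^'n) \<times> (real^'n) \<Rightarrow> real) \<Rightarrow> 'n \<Rightarrow> (real^'n) \<times> (real^'n) \<Rightarrow> real" where
  "fibre_partial g i = (\<lambda>p. frechet_derivative g (at p) (0, axis i 1))"

lemma has_partials_fibre_partial:
  fixes g :: "(real^'n) \<times> (real^'n) \<Rightarrow> real"
  assumes "g differentiable (at (x, z))"
  shows "has_partials (\<lambda>w. g (x, w)) (\<lambda>i w. fibre_partial g i (x, w)) z"
proof -
  let ?D = "frechet_derivative g (at (x, z))"
  have D: "(g has_derivative ?D) (at (x, z))"
    using assms frechet_derivative_works by blast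
  have "((\<lambda>w. (x, w)) has_derivative (\<lambda>v. (0, v))) (at z)"
    by (auto intro!: derivative_eq_intros)
  from has_derivative_compose[OF this D]
  have d: "((\<lambda>w. g (x, w)) has_derivative (\<lambda>v. ?D (0, v))) (at z)"
    by simp
  show ?thesis unfolding has_partials_def
    by (rule has_derivative_eq_rhs[OF d], rule ext, subst linear_vec_expansion[OF has_derivative_linear[OF d]])
      (simp add: fibre_partial_def)
qed

lemma Ck_on_continuous_on: "Ck_on k S f \<Longrightarrow> continuous_on S f"
  by (cases k) (auto intro: differentiable_imp_continuous_on)

lemma Ck_on_differentiable: "Ck_on (Suc k) S f \<Longrightarrow> open S \<Longrightarrow> p \<in> S \<Longrightarrow> f differentiable (at p)"
  by (auto simp: differentiable_on_eq_differentiable_at)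

lemma Ck_on_fibre_partial: "Ck_on (Suc k) S f \<Longrightarrow> Ck_on k S (fibre_partial f i)"
  by (simp add: fibre_partial_def)

lemma fibre_tensors_from_partials:
  fixes F :: "real^'n \<Rightarrow> real"
  assumes G1: "\<And>w. w \<noteq> 0 \<Longrightarrow> has_partials F G1 w"
    and G2: "\<And>w i. w \<noteq> 0 \<Longrightarrow> has_partials (G1 i) (G2 i) w"
    and G3: "\<And>w i j. w \<noteq> 0 \<Longrightarrow> has_partials (G2 i j) (G3 i j) w"
    and G2_sym: "\<And>i j. G2 i j y = G2 j i y" and G3_sym: "\<And>i j k. G3 i j k y = G3 j i k y"
    and y: "y \<noteq> 0"
  shows "lcov F i y = G1 i y"
    and "gf F i j y = G1 i y * G1 j y + F y * G2 i j y"
    and "cf F i j k y = (G2 i k y * G1 j y + G1 i y * G2 j k y + G1 k y * G2 i j y + F y * G3 i j k y) / 2"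
proof -
  have Y: "open (UNIV - {0::real^'n})"
    by (simp add: open_Diff)
  show "lcov F i y = G1 i y"
    unfolding lcov_def by (rule dy_eq_partial[OF G1[OF y]])
  have gf: "gf F a b w = G1 a w * G1 b w + F w * G2 b a w" if w: "w \<noteq> 0" for a b w
  proof -
    have dsq: "dy (\<lambda>w. (F w)\<^sup>2) b u = G1 b u * F u + F u * G1 b u" if "u \<in> UNIV - {0}" for u
      unfolding power2_eq_square by (rule dy_eq_partial[OF has_partials_mult[OF G1 G1]]) (use that in auto)
    have "has_partials (\<lambda>u. G1 b u * F u + F u * G1 b u)
        (\<lambda>k u. (G2 b k u * F u + G1 b u * G1 k u) + (G1 k u * G1 b u + F u * G2 b k u)) w"
      by (rule has_partials_add[OF has_partials_mult[OF G2 G1] has_partials_mult[OF G1 G2]]) (use w in auto)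
    then have "has_partials (\<lambda>u. dy (\<lambda>w. (F w)\<^sup>2) b u)
        (\<lambda>k u. (G2 b k u * F u + G1 b u * G1 k u) + (G1 k u * G1 b u + F u * G2 b k u)) w"
      by (rule has_partials_transform[OF _ Y]) (use w dsq in auto)
    then show ?thesis
      unfolding gf_def by (simp add: dy_eq_partial algebra_simps)
  qed
  then show "gf F i j y = G1 i y * G1 j y + F y * G2 i j y"
    using y G2_sym by simp
  have "has_partials (\<lambda>u. G1 i u * G1 j u + F u * G2 j i u)
      (\<lambda>k u. (G2 i k u * G1 j u + G1 i u * G2 j k u) + (G1 k u * G2 j i u + F u * G3 j i k u)) y"
    by (rule has_partials_add[OF has_partials_mult[OF G2 G2] has_partials_mult[OF G1 G3]]) (use y in auto)
  then have "has_partials (\<lambda>u. gf F i j u)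
      (\<lambda>k u. (G2 i k u * G1 j u + G1 i u * G2 j k u) + (G1 k u * G2 j i u + F u * G3 j i k u)) y"
    by (rule has_partials_transform[OF _ Y]) (use y gf in auto)
  then show "cf F i j k y = (G2 i k y * G1 j y + G1 i y * G2 j k y + G1 k y * G2 i j y + F y * G3 i j k y) / 2"
    unfolding cf_def by (simp add: dy_eq_partial G2_sym[of j i] G3_sym[of j i] algebra_simps)
qed

section \<open>Symmetry of mixed partials and Euler's identities\<close>

lemma mixed_difference_mvt:
  fixes G :: "real^'n \<Rightarrow> real"
  assumes s: "s > 0" "2 * s < \<delta>"
    and G1: "\<And>w. w \<in> ball z \<delta> \<Longrightarrow> has_partials G G1 w"
    and G2: "\<And>w. w \<in> ball z \<delta> \<Longrightarrow> has_partials (G1 i) (G2 i) w"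
  shows "\<exists>\<xi>\<in>ball z \<delta>. G (z + s *\<^sub>R axis i 1 + s *\<^sub>R axis j 1) - G (z + s *\<^sub>R axis i 1)
            - G (z + s *\<^sub>R axis j 1) + G z = s * s * G2 i j \<xi>"
proof -
  define ei :: "real^'n" where "ei = axis i 1"
  define ej :: "real^'n" where "ej = axis j 1"
  have box: "z + a *\<^sub>R ei + b *\<^sub>R ej \<in> ball z \<delta>" if "0 \<le> a" "a \<le> s" "0 \<le> b" "b \<le> s" for a b
  proof -
    have "norm (a *\<^sub>R ei + b *\<^sub>R ej) \<le> norm (a *\<^sub>R ei) + norm (b *\<^sub>R ej)"
      by (rule norm_triangle_ineq)
    also have "\<dots> < \<delta>"
      using that s by (simp add: ei_def ej_def)
    finally have "norm (a *\<^sub>R ei + b *\<^sub>R ej) < \<delta>" .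
    moreover have "dist z (z + (a *\<^sub>R ei + b *\<^sub>R ej)) = norm (a *\<^sub>R ei + b *\<^sub>R ej)"
      by (metis add_diff_cancel_left' dist_commute dist_norm)
    ultimately show ?thesis
      by (simp add: add.assoc)
  qed
  define \<phi> where "\<phi> = (\<lambda>a. G (z + s *\<^sub>R ej + a *\<^sub>R ei) - G (z + a *\<^sub>R ei))"
  have d\<phi>: "DERIV \<phi> a :> G1 i (z + s *\<^sub>R ej + a *\<^sub>R ei) - G1 i (z + a *\<^sub>R ei)" if "0 \<le> a" "a \<le> s" for a
  proof -
    have "z + s *\<^sub>R ej + a *\<^sub>R ei \<in> ball z \<delta>" "z + a *\<^sub>R ei \<in> ball z \<delta>"
      using box[of a s] box[of a 0] that s by (simp_all add: algebra_simps)
    from this[THEN G1, THEN has_partials_line] show ?thesis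
      unfolding \<phi>_def by (auto intro!: derivative_eq_intros simp: ei_def sum_axis_mult)
  qed
  obtain a0 where a0: "0 < a0" "a0 < s"
    and mvt1: "\<phi> s - \<phi> 0 = s * (G1 i (z + s *\<^sub>R ej + a0 *\<^sub>R ei) - G1 i (z + a0 *\<^sub>R ei))"
    using MVT2[of 0 s \<phi> "\<lambda>a. G1 i (z + s *\<^sub>R ej + a *\<^sub>R ei) - G1 i (z + a *\<^sub>R ei)"] d\<phi> s by auto
  define \<psi> where "\<psi> = (\<lambda>b. G1 i (z + a0 *\<^sub>R ei + b *\<^sub>R ej))"
  have d\<psi>: "DERIV \<psi> b :> G2 i j (z + a0 *\<^sub>R ei + b *\<^sub>R ej)" if "0 \<le> b" "b \<le> s" for b
    using has_partials_line[OF G2[OF box[of a0 b]]] that a0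
    by (simp add: \<psi>_def ej_def sum_axis_mult)
  obtain b0 where b0: "0 < b0" "b0 < s" and mvt2: "\<psi> s - \<psi> 0 = s * G2 i j (z + a0 *\<^sub>R ei + b0 *\<^sub>R ej)"
    using MVT2[of 0 s \<psi> "\<lambda>b. G2 i j (z + a0 *\<^sub>R ei + b *\<^sub>R ej)"] d\<psi> s by auto
  have "G (z + s *\<^sub>R ei + s *\<^sub>R ej) - G (z + s *\<^sub>R ei) - G (z + s *\<^sub>R ej) + G z = \<phi> s - \<phi> 0"
    by (simp add: \<phi>_def algebra_simps)
  also have "\<dots> = s * s * G2 i j (z + a0 *\<^sub>R ei + b0 *\<^sub>R ej)"
    using mvt1 mvt2 by (simp add: \<psi>_def algebra_simps)
  finally show ?thesis
    using box[of a0 b0] a0 b0 unfolding ei_def ej_def by auto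
qed

lemma partials_commute:
  fixes G :: "real^'n \<Rightarrow> real"
  assumes Y: "open Y" and z: "z \<in> Y"
    and G1: "\<And>w. w \<in> Y \<Longrightarrow> has_partials G G1 w"
    and G2: "\<And>w k. w \<in> Y \<Longrightarrow> has_partials (G1 k) (G2 k) w"
    and cont: "continuous_on Y (G2 i j)" "continuous_on Y (G2 j i)"
  shows "G2 i j z = G2 j i z"
proof (rule ccontr)
  assume ne: "G2 i j z \<noteq> G2 j i z"
  define \<epsilon> where "\<epsilon> = \<bar>G2 i j z - G2 j i z\<bar> / 2"
  have "\<epsilon> > 0"
    using ne by (simp add: \<epsilon>_def)
  then obtain d1 d2 where d12: "d1 > 0" "d2 > 0"
    and d1: "\<And>w. w \<in> Y \<Longrightarrow> dist w z < d1 \<Longrightarrow> dist (G2 i j w) (G2 i j z) < \<epsilon>"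
    and d2: "\<And>w. w \<in> Y \<Longrightarrow> dist w z < d2 \<Longrightarrow> dist (G2 j i w) (G2 j i z) < \<epsilon>"
    using cont z unfolding continuous_on_iff by (metis dist_commute)
  obtain d3 where d3: "d3 > 0" "ball z d3 \<subseteq> Y"
    using Y z open_contains_ball by blast
  define \<delta> where "\<delta> = min d1 (min d2 d3)"
  have ball: "ball z \<delta> \<subseteq> Y"
    using d3 by (auto simp: \<delta>_def)
  define s where "s = \<delta> / 3"
  have s: "s > 0" "2 * s < \<delta>"
    using d12 d3 by (auto simp: s_def \<delta>_def)
  obtain \<xi>1 where \<xi>1: "\<xi>1 \<in> ball z \<delta>" and e1: "G (z + s *\<^sub>R axis i 1 + s *\<^sub>R axis j 1) - G (z + s *\<^sub>R axis i 1)
      - G (z + s *\<^sub>R axis j 1) + G z = s * s * G2 i j \<xi>1"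
    using mixed_difference_mvt[OF s, of z G G1 i G2 j] ball G1 G2 by blast
  obtain \<xi>2 where \<xi>2: "\<xi>2 \<in> ball z \<delta>" and e2: "G (z + s *\<^sub>R axis j 1 + s *\<^sub>R axis i 1) - G (z + s *\<^sub>R axis j 1)
      - G (z + s *\<^sub>R axis i 1) + G z = s * s * G2 j i \<xi>2"
    using mixed_difference_mvt[OF s, of z G G1 j G2 i] ball G1 G2 by blast
  have "G2 i j \<xi>1 = G2 j i \<xi>2"
    using e1 e2 s by (simp add: algebra_simps)
  moreover have "\<xi>1 \<in> Y" "\<xi>2 \<in> Y"
    using \<xi>1 \<xi>2 ball by auto
  then have "\<bar>G2 i j \<xi>1 - G2 i j z\<bar> < \<epsilon>" "\<bar>G2 j i \<xi>2 - G2 j i z\<bar> < \<epsilon>"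
    using d1[of \<xi>1] d2[of \<xi>2] \<xi>1 \<xi>2 by (auto simp: \<delta>_def dist_commute dist_real_def)
  ultimately show False
    by (auto simp: \<epsilon>_def abs_if split: if_splits)
qed

lemma euler_identity:
  assumes G': "has_partials G G' y" and hom: "\<And>t. t > 0 \<Longrightarrow> G (t *\<^sub>R y) = c t * G y"
    and c': "(c has_real_derivative c') (at 1)"
  shows "(\<Sum>k\<in>UNIV. y$k * G' k y) = c' * G y"
proof -
  have "((\<lambda>s. G (0 + s *\<^sub>R y)) has_real_derivative (\<Sum>k\<in>UNIV. y$k * G' k y)) (at 1)"
    using has_partials_line[of G G' 0 1 y] G' by simp
  then have "((\<lambda>s. c s * G y) has_real_derivative (\<Sum>k\<in>UNIV. y$k * G' k y)) (at 1)"
    by (rule has_field_derivative_transform_within_open[of _ _ _ "{0<..}"]) (auto simp: hom)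
  then show ?thesis
    using DERIV_unique DERIV_cmult_right[OF c'] by blast
qed

lemma partials_homogeneous:
  assumes Y: "open Y" and w: "w \<in> Y" and t: "t > 0"
    and G'w: "has_partials G G' w" and G'tw: "has_partials G G' (t *\<^sub>R w)"
    and hom: "\<And>u. u \<in> Y \<Longrightarrow> G (t *\<^sub>R u) = c * G u"
  shows "t * G' i (t *\<^sub>R w) = c * G' i w"
proof -
  have "((\<lambda>u. t *\<^sub>R u) has_derivative (\<lambda>v. t *\<^sub>R v)) (at w)"
    by (auto intro!: derivative_eq_intros)
  from has_derivative_compose[OF this G'tw[unfolded has_partials_def]]
  have "((\<lambda>u. c * G u) has_derivative (\<lambda>v. \<Sum>k\<in>UNIV. (t *\<^sub>R v)$k * G' k (t *\<^sub>R w))) (at w)"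
    by (rule has_derivative_transform_within_open[OF _ Y w]) (simp add: hom)
  from has_partials_unique[OF has_partials_cmult[OF G'w] this, of i]
  have "t * (\<Sum>k\<in>UNIV. axis i 1 $ k * G' k (t *\<^sub>R w)) = c * G' i w"
    by (simp add: sum_distrib_left mult.assoc)
  then show ?thesis
    by (simp add: sum_axis_mult)
qed

lemma euler_identities:
  fixes G :: "real^'n \<Rightarrow> real"
  assumes G1: "\<And>w. w \<noteq> 0 \<Longrightarrow> has_partials G G1 w"
    and G2: "\<And>w i. w \<noteq> 0 \<Longrightarrow> has_partials (G1 i) (G2 i) w"
    and G3: "\<And>w i j. w \<noteq> 0 \<Longrightarrow> has_partials (G2 i j) (G3 i j) w"
    and hom: "\<And>t w. t > 0 \<Longrightarrow> G (t *\<^sub>R w) = t * G w"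
    and y: "y \<noteq> 0"
  shows "(\<Sum>k\<in>UNIV. y$k * G1 k y) = G y"
    and "(\<Sum>k\<in>UNIV. y$k * G2 i k y) = 0"
    and "(\<Sum>k\<in>UNIV. y$k * G3 i j k y) = - G2 i j y"
proof -
  have Y: "open (UNIV - {0::real^'n})"
    by (simp add: open_Diff)
  show "(\<Sum>k\<in>UNIV. y$k * G1 k y) = G y"
    using euler_identity[OF G1[OF y], of "\<lambda>t. t" 1] hom by (auto intro!: derivative_eq_intros)
  have hom1: "G1 i (t *\<^sub>R w) = G1 i w" if "t > 0" "w \<noteq> 0" for t w i
  proof -
    have "t * G1 i (t *\<^sub>R w) = t * G1 i w"
      by (rule partials_homogeneous[OF Y _ that(1) G1 G1]) (use hom that in auto)
    then show ?thesis
      using that by simp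
  qed
  show "(\<Sum>k\<in>UNIV. y$k * G2 i k y) = 0"
    using euler_identity[OF G2[OF y], of i "\<lambda>t. 1" 0] hom1 y by auto
  have hom2: "G2 i j (t *\<^sub>R w) = inverse t * G2 i j w" if "t > 0" "w \<noteq> 0" for t w i j
  proof -
    have "t * G2 i j (t *\<^sub>R w) = 1 * G2 i j w"
      by (rule partials_homogeneous[OF Y _ that(1) G2 G2]) (use hom1 that in auto)
    then show ?thesis
      using that by (simp add: field_simps)
  qed
  have "((\<lambda>t. inverse t) has_real_derivative -1) (at (1::real))"
    using DERIV_inverse[of "1::real" UNIV] by simp
  then show "(\<Sum>k\<in>UNIV. y$k * G3 i j k y) = - G2 i j y"
    using euler_identity[OF G3[OF y], of i j "\<lambda>t. inverse t" "-1"] hom2 y by auto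
qed

lemma partials_symmetric:
  assumes Y: "open Y" and w: "w \<in> Y"
    and G1: "\<And>w. w \<in> Y \<Longrightarrow> has_partials G G1 w"
    and G2: "\<And>w i. w \<in> Y \<Longrightarrow> has_partials (G1 i) (G2 i) w"
    and G3: "\<And>w i j. w \<in> Y \<Longrightarrow> has_partials (G2 i j) (G3 i j) w"
    and cont: "\<And>i j. continuous_on Y (G2 i j)" "\<And>i j k. continuous_on Y (G3 i j k)"
  shows "G2 i j w = G2 j i w" and "G3 i j k w = G3 j i k w" and "G3 i j k w = G3 i k j w"
proof -
  have G2_sym: "G2 i j u = G2 j i u" if "u \<in> Y" for i j u
    by (rule partials_commute[OF Y that G1 G2 cont(1) cont(1)])
  then show "G2 i j w = G2 j i w"
    using w .
  have "has_partials (G2 j i) (G3 i j) w"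
    by (rule has_partials_transform[OF G3[OF w] Y w]) (simp add: G2_sym)
  then show "G3 i j k w = G3 j i k w"
    using has_partials_unique[OF G3[OF w, of j i], of _ k] by (simp add: has_partials_def sum_axis_mult)
  show "G3 i j k w = G3 i k j w"
    by (rule partials_commute[OF Y w G2 G3 cont(2) cont(2)])
qed

section \<open>From Finsler metrics to their jets\<close>

lemma finsler_fibre_jets:
  fixes L :: "real^'n \<Rightarrow> real^'n \<Rightarrow> real"
  assumes U: "open U" and fL: "finsler U L" and x: "x \<in> U"
  obtains G1 G2 G3 where
    "\<And>w. w \<noteq> 0 \<Longrightarrow> has_partials (L x) G1 w"
    "\<And>w i. w \<noteq> 0 \<Longrightarrow> has_partials (G1 i) (G2 i) w"
    "\<And>w i j. w \<noteq> 0 \<Longrightarrow> has_partials (G2 i j) (G3 i j) w"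
    "\<And>w i j. w \<noteq> 0 \<Longrightarrow> G2 i j w = G2 j i w"
    "\<And>w i j k. w \<noteq> 0 \<Longrightarrow> G3 i j k w = G3 j i k w"
    "\<And>w i j k. w \<noteq> 0 \<Longrightarrow> G3 i j k w = G3 i k j w"
proof -
  define Y where "Y = UNIV - {0::real^'n}"
  define f where "f = (\<lambda>(x, y). L x y)"
  define f1 f2 f3 where "f1 i = fibre_partial f i" and "f2 i j = fibre_partial (f1 i) j"
    and "f3 i j k = fibre_partial (f2 i j) k" for i j k
  have Y: "open Y" and UY: "open (U \<times> Y)" and xw: "w \<in> Y \<Longrightarrow> (x, w) \<in> U \<times> Y" for w
    using U x by (simp_all add: Y_def open_Diff open_Times)
  have C4: "Ck_on (Suc (Suc (Suc (Suc 0)))) (U \<times> Y) f"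
    using fL unfolding finsler_def smooth_on_def f_def Y_def by blast
  have C3: "Ck_on (Suc (Suc (Suc 0))) (U \<times> Y) (f1 i)" for i
    unfolding f1_def by (rule Ck_on_fibre_partial[OF C4])
  have C2: "Ck_on (Suc (Suc 0)) (U \<times> Y) (f2 i j)" for i j
    unfolding f2_def by (rule Ck_on_fibre_partial[OF C3])
  have C1: "Ck_on (Suc 0) (U \<times> Y) (f3 i j k)" for i j k
    unfolding f3_def by (rule Ck_on_fibre_partial[OF C2])
  define G1 G2 G3 where "G1 i w = f1 i (x, w)" and "G2 i j w = f2 i j (x, w)"
    and "G3 i j k w = f3 i j k (x, w)" for i j k w
  have "L x = (\<lambda>w. f (x, w))"
    by (simp add: f_def)
  then have G1: "has_partials (L x) G1 w" and G2: "has_partials (G1 i) (G2 i) w"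
    and G3: "has_partials (G2 i j) (G3 i j) w" if "w \<in> Y" for w i j
    unfolding G1_def G2_def G3_def f1_def f2_def f3_def
    using has_partials_fibre_partial[OF Ck_on_differentiable[OF C4 UY xw[OF that]]]
      has_partials_fibre_partial[OF Ck_on_differentiable[OF C3 UY xw[OF that]]]
      has_partials_fibre_partial[OF Ck_on_differentiable[OF C2 UY xw[OF that]]]
    by (simp_all add: f1_def f2_def)
  have pair: "continuous_on Y (\<lambda>w. (x, w))" "(\<lambda>w. (x, w)) ` Y \<subseteq> U \<times> Y"
    using x by (auto intro!: continuous_intros)
  have "continuous_on Y (G2 i j)" "continuous_on Y (G3 i j k)" for i j k
    unfolding G2_def G3_def
    by (rule continuous_on_compose2[OF Ck_on_continuous_on[OF C2] pair],
        rule continuous_on_compose2[OF Ck_on_continuous_on[OF C1] pair])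
  note sym = partials_symmetric[OF Y _ G1 G2 G3 this]
  show ?thesis
    by (rule that[of G1 G2 G3]) (auto simp: Y_def intro: G1 G2 G3 sym)
qed

lemma pos_def_matrix_inv:
  fixes A :: "real^'n^'n"
  assumes pd: "\<forall>v. v \<noteq> 0 \<longrightarrow> v \<bullet> (A *v v) > 0"
  shows "(\<Sum>k\<in>UNIV. matrix_inv A $ i $ k * A $ k $ j) = (if i = j then 1 else 0)"
    and "(\<Sum>k\<in>UNIV. A $ i $ k * matrix_inv A $ k $ j) = (if i = j then 1 else 0)"
proof -
  have "\<forall>x. A *v x = 0 \<longrightarrow> x = 0"
    using pd by (metis inner_zero_right less_irrefl)
  then have "invertible A"
    using matrix_left_invertible_ker invertible_left_inverse by blast
  then have inv: "A ** matrix_inv A = mat 1 \<and> matrix_inv A ** A = mat 1"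
    unfolding invertible_def matrix_inv_def by (rule someI_ex)
  show "(\<Sum>k\<in>UNIV. matrix_inv A $ i $ k * A $ k $ j) = (if i = j then 1 else 0)"
    using arg_cong[OF conjunct2[OF inv], of "\<lambda>M. M $ i $ j"] by (simp add: matrix_matrix_mult_def mat_def)
  show "(\<Sum>k\<in>UNIV. A $ i $ k * matrix_inv A $ k $ j) = (if i = j then 1 else 0)"
    using arg_cong[OF conjunct1[OF inv], of "\<lambda>M. M $ i $ j"] by (simp add: matrix_matrix_mult_def mat_def)
qed

lemma zeta_eq_zeta_of:
  assumes "\<And>a b. ginv F a b y = G a b" "\<And>a b d. cf F a b d y = c a b d" "\<And>a b. hf F a b y = h\<^sub>0 a b"
  shows "zeta F h i j k y = zeta_of (F y) G c h\<^sub>0 h i j k"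
  by (simp add: zeta_def zeta_of_def Sf_def S_of_def cmix_def cmix_of_def Sscal_def Sscal_of_def
      Sric_def Sric_of_def assms)

lemma Hf_eq_H_of:
  assumes "\<And>a b. ginv F a b y = G a b" "\<And>a b d. cf F a b d y = c a b d" "\<And>a b. hf F a b y = h\<^sub>0 a b"
    "\<And>a. mcov F bx a y = m a"
  shows "Hf F Ls bx i j y = H_of G c h\<^sub>0 m (Ls y) i j"
  by (simp add: Hf_def H_of_def cmix_def cmix_of_def msq_def msq_of_def assms)

lemma Abeta_eq_Abeta_of:
  assumes "\<And>a b. ginv F a b y = G a b" "\<And>a b d. cf F a b d y = c a b d" "\<And>a. mcov F bx a y = m a"
  shows "Abeta F Ls bx y = Abeta_of G c (\<lambda>j. bx $ j) m (Ls y)"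
  by (simp add: Abeta_def Abeta_of_def cbeta_def cvec_def cvec_of_def msq_def msq_of_def assms)

lemma has_partials_Lstar:
  assumes G1: "\<And>w. w \<noteq> 0 \<Longrightarrow> has_partials (L x) G1 w"
    and G2: "\<And>w i. w \<noteq> 0 \<Longrightarrow> has_partials (G1 i) (G2 i) w"
    and G3: "\<And>w i j. w \<noteq> 0 \<Longrightarrow> has_partials (G2 i j) (G3 i j) w"
  shows "\<And>w. w \<noteq> 0 \<Longrightarrow> has_partials (Lstar \<sigma> b L x) (\<lambda>i u. exp (\<sigma> x) * G1 i u + b x $ i) w"
    and "\<And>w i. w \<noteq> 0 \<Longrightarrow> has_partials (\<lambda>u. exp (\<sigma> x) * G1 i u + b x $ i) (\<lambda>j u. exp (\<sigma> x) * G2 i j u) w"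
    and "\<And>w i j. w \<noteq> 0 \<Longrightarrow> has_partials (\<lambda>u. exp (\<sigma> x) * G2 i j u) (\<lambda>k u. exp (\<sigma> x) * G3 i j k u) w"
proof -
  show "has_partials (Lstar \<sigma> b L x) (\<lambda>i u. exp (\<sigma> x) * G1 i u + b x $ i) w" if "w \<noteq> 0" for w
    using has_partials_add[OF has_partials_cmult[where a = "exp (\<sigma> x)", OF G1[OF that]]
        has_partials_inner[where b = "b x"]]
    by (simp add: Lstar_def[abs_def])
  show "has_partials (\<lambda>u. exp (\<sigma> x) * G1 i u + b x $ i) (\<lambda>j u. exp (\<sigma> x) * G2 i j u) w"
    if "w \<noteq> 0" for w i
    using has_partials_add[OF has_partials_cmult[where a = "exp (\<sigma> x)", OF G2[OF that]]
        has_partials_const[where a = "b x $ i"]]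
    by simp
  show "has_partials (\<lambda>u. exp (\<sigma> x) * G2 i j u) (\<lambda>k u. exp (\<sigma> x) * G3 i j k u) w"
    if "w \<noteq> 0" for w i j
    using has_partials_cmult[OF G3[OF that]] .
qed

lemma conformal_beta_jet_at:
  fixes L :: "real^'n \<Rightarrow> real^'n \<Rightarrow> real" and \<sigma> :: "real^'n \<Rightarrow> real" and b :: "real^'n \<Rightarrow> real^'n"
  assumes fL: "finsler U L" and fLs: "finsler U (Lstar \<sigma> b L)" and x: "x \<in> U" and y: "y \<noteq> 0"
    and G1: "\<And>w. w \<noteq> 0 \<Longrightarrow> has_partials (L x) G1 w"
    and G2: "\<And>w i. w \<noteq> 0 \<Longrightarrow> has_partials (G1 i) (G2 i) w"
    and G3: "\<And>w i j. w \<noteq> 0 \<Longrightarrow> has_partials (G2 i j) (G3 i j) w"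
    and G2_sym: "\<And>i j. G2 i j y = G2 j i y"
    and G3_sym: "\<And>i j k. G3 i j k y = G3 j i k y" "\<And>i j k. G3 i j k y = G3 i k j y"
  shows "conformal_beta_jet (\<lambda>i. y $ i) (L x y) (\<lambda>i. G1 i y) (\<lambda>i j. G2 i j y) (\<lambda>i j k. G3 i j k y)
    (\<lambda>i j. ginv (L x) i j y) (exp (\<sigma> x)) (\<lambda>i. b x $ i) (\<lambda>i j. ginv (Lstar \<sigma> b L x) i j y)"
proof unfold_locales
  have Ls_y: "Lstar \<sigma> b L x y = exp (\<sigma> x) * L x y + dotv (\<lambda>i. b x $ i) (\<lambda>i. y $ i)"
    by (simp add: Lstar_def inner_vec_def dotv_def)
  have pos: "L x y > 0" "Lstar \<sigma> b L x y > 0"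
    and pd: "\<forall>v. v \<noteq> 0 \<longrightarrow> v \<bullet> (gmat (L x) y *v v) > 0"
      "\<forall>v. v \<noteq> 0 \<longrightarrow> v \<bullet> (gmat (Lstar \<sigma> b L x) y *v v) > 0"
    and hom: "\<And>t w. t > 0 \<Longrightarrow> L x (t *\<^sub>R w) = t * L x w"
    using fL fLs x y unfolding finsler_def by auto
  note Ls_G = has_partials_Lstar(1,2)[where L = L and x = x and \<sigma> = \<sigma> and b = b, OF G1 G2 G3]
    has_partials_Lstar(3)[where L = L and x = x and \<sigma> = \<sigma>, OF G1 G2 G3]
  have Ls_sym: "exp (\<sigma> x) * G2 i j y = exp (\<sigma> x) * G2 j i y"
    "exp (\<sigma> x) * G3 i j k y = exp (\<sigma> x) * G3 j i k y" for i j k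
    using G2_sym G3_sym by simp_all
  note gf = fibre_tensors_from_partials(2)[OF G1 G2 G3 G2_sym G3_sym(1) y]
    fibre_tensors_from_partials(2)[OF Ls_G Ls_sym y]
  note euler = euler_identities[OF G1 G2 G3 hom y]
  show "0 < L x y" "0 < exp (\<sigma> x)" "0 < exp (\<sigma> x) * L x y + dotv (\<lambda>i. b x $ i) (\<lambda>i. y $ i)"
    using pos Ls_y by simp_all
  show "G2 i j y = G2 j i y" "G3 i j k y = G3 j i k y" "G3 i j k y = G3 i k j y" for i j k
    using G2_sym G3_sym by blast+
  show "dotv (\<lambda>i. G1 i y) (\<lambda>i. y $ i) = L x y" "dotv (\<lambda>j. G2 i j y) (\<lambda>i. y $ i) = 0"
    "dotv (\<lambda>k. G3 i j k y) (\<lambda>i. y $ i) = - G2 i j y" for i j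
    using euler(1) euler(2)[of i] euler(3)[of i j] by (simp_all add: dotv_def mult.commute)
  show "(\<Sum>k\<in>UNIV. ginv (L x) i k y * (G1 k y * G1 j y + L x y * G2 k j y)) = (if i = j then 1 else 0)"
    "(\<Sum>k\<in>UNIV. (G1 i y * G1 k y + L x y * G2 i k y) * ginv (L x) k j y) = (if i = j then 1 else 0)"
    for i j using pos_def_matrix_inv[OF pd(1), of i j] by (simp_all add: ginv_def gmat_def gf)
  show "(\<Sum>k\<in>UNIV. ginv (Lstar \<sigma> b L x) i k y * ((exp (\<sigma> x) * G1 k y + b x $ k) * (exp (\<sigma> x) * G1 j y + b x $ j)
      + (exp (\<sigma> x) * L x y + dotv (\<lambda>i. b x $ i) (\<lambda>i. y $ i)) * (exp (\<sigma> x) * G2 k j y)))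
      = (if i = j then 1 else 0)" for i j
    using pos_def_matrix_inv(1)[OF pd(2), of i j] by (simp add: ginv_def gmat_def gf Ls_y)
qed

lemma zeta_conformal_beta_iff_at:
  fixes L :: "real^'n \<Rightarrow> real^'n \<Rightarrow> real" and \<sigma> :: "real^'n \<Rightarrow> real" and b :: "real^'n \<Rightarrow> real^'n"
  assumes n: "CARD('n) > 3" and U: "open U" and fL: "finsler U L" and fLs: "finsler U (Lstar \<sigma> b L)"
    and x: "x \<in> U" and y: "y \<noteq> 0"
  shows "(\<forall>h i j k. zeta (Lstar \<sigma> b L x) h i j k y = exp (\<sigma> x) * zeta (L x) h i j k y)
     \<longleftrightarrow> (\<forall>i j. Hf (L x) (Lstar \<sigma> b L x) (b x) i j y
              = 1 / (real CARD('n) - 1) * Abeta (L x) (Lstar \<sigma> b L x) (b x) y * hf (L x) i j y)"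
proof -
  obtain G1 G2 G3 where G1: "\<And>w. w \<noteq> 0 \<Longrightarrow> has_partials (L x) G1 w"
    and G2: "\<And>w i. w \<noteq> 0 \<Longrightarrow> has_partials (G1 i) (G2 i) w"
    and G3: "\<And>w i j. w \<noteq> 0 \<Longrightarrow> has_partials (G2 i j) (G3 i j) w"
    and G2_sym: "\<And>w i j. w \<noteq> 0 \<Longrightarrow> G2 i j w = G2 j i w"
    and G3_sym: "\<And>w i j k. w \<noteq> 0 \<Longrightarrow> G3 i j k w = G3 j i k w"
      "\<And>w i j k. w \<noteq> 0 \<Longrightarrow> G3 i j k w = G3 i k j w"
    by (fact finsler_fibre_jets[OF U fL x])
  interpret A: conformal_beta_jet "\<lambda>i. y $ i" "L x y" "\<lambda>i. G1 i y" "\<lambda>i j. G2 i j y" "\<lambda>i j k. G3 i j k y"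
      "\<lambda>i j. ginv (L x) i j y" "exp (\<sigma> x)" "\<lambda>i. b x $ i" "\<lambda>i j. ginv (Lstar \<sigma> b L x) i j y"
    by (rule conformal_beta_jet_at[OF fL fLs x y G1 G2 G3 G2_sym[OF y] G3_sym[OF y]])
  note Ls_G = has_partials_Lstar(1,2)[where L = L and x = x and \<sigma> = \<sigma> and b = b, OF G1 G2 G3]
    has_partials_Lstar(3)[where L = L and x = x and \<sigma> = \<sigma>, OF G1 G2 G3]
  note T = fibre_tensors_from_partials[OF G1 G2 G3 G2_sym[OF y] G3_sym(1)[OF y] y]
  have Ls_sym: "exp (\<sigma> x) * G2 i j y = exp (\<sigma> x) * G2 j i y"
    "exp (\<sigma> x) * G3 i j k y = exp (\<sigma> x) * G3 j i k y" for i j k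
    using G2_sym G3_sym y by simp_all
  note Ts = fibre_tensors_from_partials[OF Ls_G Ls_sym y]
  have Ls: "Lstar \<sigma> b L x y = A.Ls"
    by (simp add: Lstar_def A.Ls_def A.beta_def inner_vec_def dotv_def)
  have cf: "cf (L x) i j k y = A.c i j k" and cfs: "cf (Lstar \<sigma> b L x) i j k y = A.cs i j k"
    and hf: "hf (L x) i j y = A.ang i j" and hfs: "hf (Lstar \<sigma> b L x) i j y = A.hs i j"
    and mc: "mcov (L x) (b x) i y = A.m i" for i j k
    using T Ts Ls
    by (simp_all add: A.c_def A.cs_def A.ls_def hf_def A.ang_def A.hs_def mcov_def A.m_def A.beta_def
        inner_vec_def dotv_def algebra_simps)
  have "zeta (Lstar \<sigma> b L x) h i j k y = zeta_of A.Ls (\<lambda>i j. ginv (Lstar \<sigma> b L x) i j y) A.cs A.hs h i j k"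
    and "zeta (L x) h i j k y = zeta_of (L x y) (\<lambda>i j. ginv (L x) i j y) A.c A.ang h i j k"
    and "Hf (L x) (Lstar \<sigma> b L x) (b x) i j y = A.H i j"
    and "Abeta (L x) (Lstar \<sigma> b L x) (b x) y = A.gtrace A.H" for h i j k
    using zeta_eq_zeta_of[of "Lstar \<sigma> b L x" y, OF _ cfs hfs] zeta_eq_zeta_of[of "L x" y, OF _ cf hf]
      Hf_eq_H_of[of "L x" y, OF _ cf hf mc] Abeta_eq_Abeta_of[of "L x" y, OF _ cf mc]
      A.H_of_eq A.Abeta_of_eq Ls
    by simp_all
  then show ?thesis
    using A.zeta_of_star_iff[OF n] by (simp add: hf)
qed

theorem proposition3:
  fixes U :: "(real^'n) set"
    and L :: "real^'n \<Rightarrow> real^'n \<Rightarrow> real"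
    and \<sigma> :: "real^'n \<Rightarrow> real"
    and b :: "real^'n \<Rightarrow> real^'n"
  assumes n: "CARD('n) > 3"
    and U: "open U"
    and fL: "finsler U L"
    and s\<sigma>: "smooth_on U \<sigma>"
    and sb: "\<And>i. smooth_on U (\<lambda>x. b x $ i)"
    and fLs: "finsler U (Lstar \<sigma> b L)"
  shows "(\<forall>x\<in>U. \<forall>y. y \<noteq> 0 \<longrightarrow> (\<forall>h i j k.
            zeta (Lstar \<sigma> b L x) h i j k y = exp (\<sigma> x) * zeta (L x) h i j k y))
     \<longleftrightarrow>
         (\<forall>x\<in>U. \<forall>y. y \<noteq> 0 \<longrightarrow> (\<forall>i j.
            Hf (L x) (Lstar \<sigma> b L x) (b x) i j y
              = 1 / (real CARD('n) - 1) * Abeta (L x) (Lstar \<sigma> b L x) (b x) y * hf (L x) i j y))"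
  using zeta_conformal_beta_iff_at[OF n U fL fLs] by blast

end
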